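(* Let $G=(V,E)$ be a connected graph with $n$ vertices, $\tau$ a set of types with $|\tau|=2$, $f:\tau\to\mathbb{Q}_{\ge1}$ a fitness function, $\alpha\in\tau^+(f)$, and $D\in\mathcal D(G,\tau)$. Then $\pi_\alpha(G,\tau,f,D)\ge 1/n$.
   Context: $\tau^+(f)=\{i\in\tau: f(i)=\max_{j\in\tau}f(j)\}$. For $G=(V,E)$, $N(v)$ is the neighbourhood of $v$. $\Omega$ is the set of functions $V\to\tau$; for $S\in\Omega$, $S|_{v\to w}$ equals $S$ except $w$ gets type $S(v)$. The Moran process $M(G,\tau,f,M_0)$: Markov chain on $\Omega$ from $M_0$; given $M_t$, choose $v$ with probability $f(M_t(v))/\sum_uf(M_t(u))$, then $w\in N(v)$ uniformly, set $M_{t+1}=M_t|_{v\to w}$. $\pi_j(G,\tau,f,M_0)$ is the probability that eventually all vertices have type $j$, and $\pi_j(G,\tau,f,D)=\sum_{M_0}\Pr_D(M_0)\pi_j(G,\tau,f,M_0)$. With $k=|\tau|$, $V[k]$ is the set of $k$-tuples of distinct vertices, $\tau[k]$ the set of $k$-tuples of distinct types, $\Omega(\mathbf u,\boldsymbol\gamma)$ the set of states mapping the $i$-th entry of $\mathbf u$ to the $i$-th entry of $\boldsymbol\gamma$ for all $i$. $\mathcal D(G,\tau)$ is the set of distributions $D$ on $\Omega$ for which there are distributions $D_{\mathbf u,\boldsymbol\gamma}$ on $\Omega(\mathbf u,\boldsymbol\gamma)$ with $\Pr_D(S)=\frac{1}{|V[k]\times\tau[k]|}\sum_{(\mathbf u,\boldsymbol\gamma)\in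 V[k]\times\tau[k]}\Pr_{D_{\mathbf u,\boldsymbol\gamma}}(S)$ for all $S$. *)

theory Defs
  imports Complex_Main "HOL-Library.FuncSet" "HOL-Probability.Probability_Mass_Function"
begin

definition undirected_graph :: "'v set \<Rightarrow> ('v \<Rightarrow> 'v \<Rightarrow> bool) \<Rightarrow> bool" where
  "undirected_graph V E \<longleftrightarrow> finite V \<and> V \<noteq> {} \<and>
     (\<forall>u v. E u v \<longrightarrow> u \<in> V \<and> v \<in> V) \<and>
     (\<forall>u v. E u v \<longrightarrow> E v u) \<and> (\<forall>u. \<not> E u u)"

definition connected_graph :: "'v set \<Rightarrow> ('v \<Rightarrow> 'v \<Rightarrow> bool) \<Rightarrow> bool" where
  "connected_graph V E \<longleftrightarrow> undirected_graph V E \<and>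
     (\<forall>u\<in>V. \<forall>v\<in>V. (u, v) \<in> {(x, y). E x y}\<^sup>*)"

definition nbhd :: "'v set \<Rightarrow> ('v \<Rightarrow> 'v \<Rightarrow> bool) \<Rightarrow> 'v \<Rightarrow> 'v set" where
  "nbhd V E v = {w \<in> V. E v w}"

definition states :: "'v set \<Rightarrow> 't set \<Rightarrow> ('v \<Rightarrow> 't) set" where
  "states V \<tau> = V \<rightarrow>\<^sub>E \<tau>"

definition max_types :: "'t set \<Rightarrow> ('t \<Rightarrow> rat) \<Rightarrow> 't set" where
  "max_types \<tau> f = {i \<in> \<tau>. f i = Max (f ` \<tau>)}"

definition total_fitness :: "'v set \<Rightarrow> ('t \<Rightarrow> rat) \<Rightarrow> ('v \<Rightarrow> 't) \<Rightarrow> real" where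
  "total_fitness V f S = (\<Sum>u\<in>V. real_of_rat (f (S u)))"

definition reproduce :: "('v \<Rightarrow> 't) \<Rightarrow> 'v \<Rightarrow> 'v \<Rightarrow> ('v \<Rightarrow> 't)" where
  "reproduce S v w = S(w := S v)"

definition monochromatic :: "'v set \<Rightarrow> 't \<Rightarrow> ('v \<Rightarrow> 't) \<Rightarrow> bool" where
  "monochromatic V j S \<longleftrightarrow> (\<forall>v\<in>V. S v = j)"

text \<open>Probability that the Moran process started at S has all vertices of type j
  at some time in {0..t} (hitting probability within t steps), computed via the
  transition probabilities f(S v)/sum_u f(S u) * 1/|N(v)|.\<close>
fun hit_within :: "'v set \<Rightarrow> ('v \<Rightarrow> 'v \<Rightarrow> bool) \<Rightarrow> ('t \<Rightarrow> rat) \<Rightarrow> 't \<Rightarrow> nat \<Rightarrow> ('v \<Rightarrow> 't) \<Rightarrow> real" where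
  "hit_within V E f j 0 S = (if monochromatic V j S then 1 else 0)"
| "hit_within V E f j (Suc t) S =
     (if monochromatic V j S then 1 else
       (\<Sum>v\<in>V. \<Sum>w\<in>nbhd V E v.
          real_of_rat (f (S v)) / total_fitness V f S * (1 / real (card (nbhd V E v)))
          * hit_within V E f j t (reproduce S v w)))"

definition fixation_prob :: "'v set \<Rightarrow> ('v \<Rightarrow> 'v \<Rightarrow> bool) \<Rightarrow> ('t \<Rightarrow> rat) \<Rightarrow> 't \<Rightarrow> ('v \<Rightarrow> 't) \<Rightarrow> real" where
  "fixation_prob V E f j S = (SUP t. hit_within V E f j t S)"

definition fixation_prob_dist :: "'v set \<Rightarrow> ('v \<Rightarrow> 'v \<Rightarrow> bool) \<Rightarrow> 't set \<Rightarrow> ('t \<Rightarrow> rat) \<Rightarrow> 't \<Rightarrow> ('v \<Rightarrow> 't) pmf \<Rightarrow> real" where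
  "fixation_prob_dist V E \<tau> f j D = (\<Sum>S\<in>states V \<tau>. pmf D S * fixation_prob V E f j S)"

definition distinct_tuples :: "nat \<Rightarrow> 'a set \<Rightarrow> 'a list set" where
  "distinct_tuples k A = {xs. length xs = k \<and> distinct xs \<and> set xs \<subseteq> A}"

definition states_fixing :: "'v set \<Rightarrow> 't set \<Rightarrow> 'v list \<Rightarrow> 't list \<Rightarrow> ('v \<Rightarrow> 't) set" where
  "states_fixing V \<tau> us gs = {S \<in> states V \<tau>. \<forall>i < length us. S (us ! i) = gs ! i}"

definition init_dists :: "'v set \<Rightarrow> 't set \<Rightarrow> ('v \<Rightarrow> 't) pmf set" where
  "init_dists V \<tau> = {D. \<exists>Dd :: 'v list \<times> 't list \<Rightarrow> ('v \<Rightarrow> 't) pmf.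
     (\<forall>p \<in> distinct_tuples (card \<tau>) V \<times> distinct_tuples (card \<tau>) \<tau>.
        set_pmf (Dd p) \<subseteq> states_fixing V \<tau> (fst p) (snd p)) \<and>
     (\<forall>S. pmf D S = 1 / real (card (distinct_tuples (card \<tau>) V \<times> distinct_tuples (card \<tau>) \<tau>))
        * (\<Sum>p \<in> distinct_tuples (card \<tau>) V \<times> distinct_tuples (card \<tau>) \<tau>. pmf (Dd p) S))}"

end

theory Submission
  imports Defs
begin

text \<open>Weight each vertex by the inverse of its degree and let the potential of a state be the
  weighted share of the vertices of type \<alpha>. When \<alpha> has maximal fitness the potential is a
  submartingale: along an edge between an \<alpha>-vertex v and a non-\<alpha>-vertex w, the expected gain
  from v replacing w and the expected loss from w replacing v differ only by the factor
  f(S v) / f(S w) \<ge> 1. From every state where \<alpha> is present, \<alpha> fixes within n steps with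
  probability at least (1/n^2)^n, so the process is absorbed almost surely and the fixation
  probability of \<alpha> is at least the initial potential. Under a distribution in \<D>(G,\<tau>) the
  vertex forced to carry \<alpha> is uniform on V, so the expected initial potential is at least 1/n.\<close>

declare hit_within.simps(2)[simp del]

lemma connected_graph_finite: "connected_graph V E \<Longrightarrow> finite V"
  unfolding connected_graph_def undirected_graph_def by simp

lemma connected_graph_edge_leaving:
  assumes "connected_graph V E" "x \<in> A" "A \<subseteq> V" "y \<in> V - A"
  shows "\<exists>v\<in>A. \<exists>w\<in>V - A. E v w"
proof -
  have "(x, y) \<in> {(x, y). E x y}\<^sup>*"
    using assms unfolding connected_graph_def by auto
  then have "y \<notin> A \<longrightarrow> (\<exists>v\<in>A. \<exists>w\<in>V - A. E v w)"
  proof (induction rule: rtrancl_induct)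
    case base
    then show ?case using assms(2) by simp
  next
    case (step y z)
    then show ?case
      using assms(1) unfolding connected_graph_def undirected_graph_def by blast
  qed
  then show ?thesis using assms(4) by simp
qed

lemma connected_graph_nbhd_nonempty:
  assumes "connected_graph V E" "2 \<le> card V" "x \<in> V"
  shows "nbhd V E x \<noteq> {}"
proof -
  have "card (V - {x}) \<noteq> 0"
    using assms by (simp add: card_Diff_singleton)
  then obtain y where "y \<in> V - {x}" by (metis card.empty ex_in_conv)
  then show ?thesis
    using connected_graph_edge_leaving[OF assms(1), of x "{x}" y] assms(3)
    unfolding nbhd_def by auto
qed

lemma double_sum_nonneg_if_pairs_nonneg:
  fixes H :: "'a \<Rightarrow> 'a \<Rightarrow> 'b::linordered_ab_group_add"
  assumes "\<And>v w. v \<in> A \<Longrightarrow> w \<in> A \<Longrightarrow> 0 \<le> H v w + H w v"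
  shows "0 \<le> (\<Sum>v\<in>A. \<Sum>w\<in>A. H v w)"
proof -
  have "(\<Sum>v\<in>A. \<Sum>w\<in>A. H v w) + (\<Sum>v\<in>A. \<Sum>w\<in>A. H v w) = (\<Sum>v\<in>A. \<Sum>w\<in>A. H v w + H w v)"
    by (subst sum.swap[of _ A A, symmetric]) (simp add: sum.distrib)
  also have "\<dots> \<ge> 0"
    using assms by (intro sum_nonneg) auto
  finally show ?thesis
    by (simp add: zero_le_double_add_iff_zero_le_single_add)
qed

lemma distinct_tuples_two: "distinct_tuples 2 A = (\<lambda>(x, y). [x, y]) ` (SIGMA x:A. A - {x})"
  unfolding distinct_tuples_def
  by (auto simp: numeral_2_eq_2 length_Suc_conv image_iff)

lemma inj_on_two_list: "inj_on (\<lambda>(x, y). [x, y]) X"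
  by (auto simp: inj_on_def)

lemma distinct_tuples_two_doubleton: "a \<noteq> b \<Longrightarrow> distinct_tuples 2 {a, b} = {[a, b], [b, a]}"
  unfolding distinct_tuples_two by auto

lemma card_distinct_tuples_two:
  assumes "finite A"
  shows "card (distinct_tuples 2 A) = card A * (card A - 1)"
proof -
  have "card (distinct_tuples 2 A) = (\<Sum>x\<in>A. card (A - {x}))"
    unfolding distinct_tuples_two using assms
    by (simp add: card_image[OF inj_on_two_list] card_SigmaI)
  also have "\<dots> = (\<Sum>x\<in>A. card A - 1)"
    using assms by (intro sum.cong) auto
  finally show ?thesis by simp
qed

lemma sum_distinct_tuples_two:
  fixes g :: "'a \<Rightarrow> real"
  assumes "finite A"
  shows "(\<Sum>u\<in>distinct_tuples 2 A. g (u ! 0) + g (u ! 1)) = 2 * (real (card A) - 1) * sum g A"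
proof -
  have "(\<Sum>u\<in>distinct_tuples 2 A. g (u ! 0) + g (u ! 1)) = (\<Sum>x\<in>A. \<Sum>y\<in>A - {x}. g x + g y)"
    unfolding distinct_tuples_two sum.reindex[OF inj_on_two_list] using assms
    by (simp add: sum.Sigma case_prod_beta)
  also have "\<dots> = (\<Sum>x\<in>A. (real (card A) - 1) * g x + (sum g A - g x))"
  proof (intro sum.cong refl)
    fix x assume "x \<in> A"
    then have "card A \<ge> 1"
      using assms by (metis card_0_eq empty_iff less_one not_le)
    then show "(\<Sum>y\<in>A - {x}. g x + g y) = (real (card A) - 1) * g x + (sum g A - g x)"
      using \<open>x \<in> A\<close> assms by (simp add: sum.distrib sum_diff1 of_nat_diff)
  qed
  also have "\<dots> = 2 * (real (card A) - 1) * sum g A"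
    by (simp add: sum.distrib sum_subtractf sum_distrib_left sum_distrib_right[symmetric] algebra_simps)
  finally show ?thesis .
qed

lemma card_ge_if_distinct_tuples_nonempty:
  assumes "finite A" "distinct_tuples k A \<noteq> {}"
  shows "k \<le> card A"
proof -
  obtain xs where "length xs = k" "distinct xs" "set xs \<subseteq> A"
    using assms(2) unfolding distinct_tuples_def by auto
  then show ?thesis
    using card_mono[OF assms(1)] distinct_card by metis
qed

lemma init_dists_tuples_nonempty:
  assumes "D \<in> init_dists V \<tau>"
  shows "distinct_tuples (card \<tau>) V \<noteq> {}"
proof
  assume "distinct_tuples (card \<tau>) V = {}"
  then have "pmf D S = 0" for S
    using assms unfolding init_dists_def by auto
  moreover obtain S where "S \<in> set_pmf D"
    using set_pmf_not_empty by fastforce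
  ultimately show False by (simp add: set_pmf_iff)
qed

locale moran_fittest =
  fixes V :: "'v set" and E :: "'v \<Rightarrow> 'v \<Rightarrow> bool" and \<tau> :: "'t set"
    and f :: "'t \<Rightarrow> rat" and \<alpha> :: 't
  assumes connected: "connected_graph V E"
    and two_le_card: "2 \<le> card V"
    and fitness_pos: "\<And>i. i \<in> \<tau> \<Longrightarrow> 0 < f i"
    and fittest: "\<And>i. i \<in> \<tau> \<Longrightarrow> f i \<le> f \<alpha>"
begin

abbreviation deg :: "'v \<Rightarrow> real" where
  "deg v \<equiv> real (card (nbhd V E v))"

definition move_prob :: "('v \<Rightarrow> 't) \<Rightarrow> 'v \<Rightarrow> real" where
  "move_prob S v = real_of_rat (f (S v)) / total_fitness V f S * (1 / deg v)"

definition step_expect :: "(('v \<Rightarrow> 't) \<Rightarrow> real) \<Rightarrow> ('v \<Rightarrow> 't) \<Rightarrow> real" where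
  "step_expect g S = (\<Sum>v\<in>V. \<Sum>w\<in>nbhd V E v. move_prob S v * g (reproduce S v w))"

lemma finite_V: "finite V"
  using connected by (rule connected_graph_finite)

lemma nbhd_subset: "nbhd V E v \<subseteq> V"
  unfolding nbhd_def by auto

lemma finite_nbhd: "finite (nbhd V E v)"
  using finite_V nbhd_subset by (rule finite_subset[rotated])

lemma deg_pos: "v \<in> V \<Longrightarrow> 0 < deg v"
  using connected_graph_nbhd_nonempty[OF connected two_le_card] finite_nbhd
  by (simp add: card_gt_0_iff)

lemma deg_le_card: "deg v \<le> real (card V)"
  using card_mono[OF finite_V nbhd_subset] by simp

lemma fitness_bounds:
  assumes "S \<in> states V \<tau>" "x \<in> V"
  shows "0 < real_of_rat (f (S x))" "real_of_rat (f (S x)) \<le> real_of_rat (f \<alpha>)"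
proof -
  have "S x \<in> \<tau>" using assms unfolding states_def by auto
  then show "0 < real_of_rat (f (S x))" "real_of_rat (f (S x)) \<le> real_of_rat (f \<alpha>)"
    using fitness_pos fittest by (simp_all add: of_rat_less_eq)
qed

lemma total_fitness_pos: "S \<in> states V \<tau> \<Longrightarrow> 0 < total_fitness V f S"
  unfolding total_fitness_def using finite_V two_le_card fitness_bounds(1)
  by (intro sum_pos) auto

lemma total_fitness_le: "S \<in> states V \<tau> \<Longrightarrow> total_fitness V f S \<le> real (card V) * real_of_rat (f \<alpha>)"
  unfolding total_fitness_def using sum_mono[of V _ "\<lambda>_. real_of_rat (f \<alpha>)"] fitness_bounds(2)
  by simp

lemma reproduce_in_states:
  "S \<in> states V \<tau> \<Longrightarrow> v \<in> V \<Longrightarrow> w \<in> V \<Longrightarrow> reproduce S v w \<in> states V \<tau>"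
  unfolding states_def reproduce_def by (auto simp: PiE_iff extensional_def)

lemma move_prob_nonneg: "S \<in> states V \<tau> \<Longrightarrow> v \<in> V \<Longrightarrow> 0 \<le> move_prob S v"
  unfolding move_prob_def using fitness_bounds(1) total_fitness_pos deg_pos
  by (simp add: less_imp_le)

lemma sum_move_prob:
  assumes "S \<in> states V \<tau>"
  shows "(\<Sum>v\<in>V. \<Sum>w\<in>nbhd V E v. move_prob S v) = 1"
proof -
  have "(\<Sum>v\<in>V. \<Sum>w\<in>nbhd V E v. move_prob S v) = (\<Sum>v\<in>V. real_of_rat (f (S v)) / total_fitness V f S)"
    using deg_pos by (intro sum.cong) (auto simp: move_prob_def)
  also have "\<dots> = 1"
    using total_fitness_pos[OF assms] by (simp add: sum_divide_distrib[symmetric] total_fitness_def)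
  finally show ?thesis .
qed

lemma step_expect_mono:
  assumes "S \<in> states V \<tau>" "\<And>S'. S' \<in> states V \<tau> \<Longrightarrow> g S' \<le> h S'"
  shows "step_expect g S \<le> step_expect h S"
  unfolding step_expect_def using nbhd_subset
  by (intro sum_mono mult_left_mono assms reproduce_in_states move_prob_nonneg) auto

lemma step_expect_nonneg:
  assumes "S \<in> states V \<tau>" "\<And>S'. S' \<in> states V \<tau> \<Longrightarrow> 0 \<le> g S'"
  shows "0 \<le> step_expect g S"
  unfolding step_expect_def using nbhd_subset
  by (intro sum_nonneg mult_nonneg_nonneg assms reproduce_in_states move_prob_nonneg) auto

lemma step_expect_add: "step_expect (\<lambda>S. g S + h S) S = step_expect g S + step_expect h S"
  unfolding step_expect_def by (simp add: sum.distrib algebra_simps)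

lemma step_expect_cmult: "step_expect (\<lambda>S. c * g S) S = c * step_expect g S"
  unfolding step_expect_def by (simp add: sum_distrib_left algebra_simps)

lemma step_expect_const: "S \<in> states V \<tau> \<Longrightarrow> step_expect (\<lambda>_. c) S = c"
  using sum_move_prob step_expect_cmult[of c "\<lambda>_. 1" S]
  unfolding step_expect_def by simp

lemma hit_within_Suc:
  "hit_within V E f \<alpha> (Suc t) S =
     (if monochromatic V \<alpha> S then 1 else step_expect (hit_within V E f \<alpha> t) S)"
  unfolding hit_within.simps(2) step_expect_def move_prob_def ..

definition weight :: "'v \<Rightarrow> real" where
  "weight v = 1 / deg v"

definition alpha_set :: "('v \<Rightarrow> 't) \<Rightarrow> 'v set" where
  "alpha_set S = {x \<in> V. S x = \<alpha>}"

lemma alpha_set_subset: "alpha_set S \<subseteq> V"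
  unfolding alpha_set_def by auto

definition potential :: "('v \<Rightarrow> 't) \<Rightarrow> real" where
  "potential S = (\<Sum>x\<in>alpha_set S. weight x) / (\<Sum>x\<in>V. weight x)"

lemma weight_pos: "v \<in> V \<Longrightarrow> 0 < weight v"
  unfolding weight_def using deg_pos by simp

lemma total_weight_pos: "0 < (\<Sum>x\<in>V. weight x)"
  using finite_V two_le_card weight_pos by (intro sum_pos) auto

lemma potential_ge_weight:
  assumes "u \<in> V" "S u = \<alpha>"
  shows "weight u / (\<Sum>x\<in>V. weight x) \<le> potential S"
  unfolding potential_def using assms finite_V weight_pos total_weight_pos
  by (intro divide_right_mono member_le_sum) (auto simp: alpha_set_def less_imp_le)

lemma potential_le_one: "potential S \<le> 1"
proof -
  have "(\<Sum>x\<in>alpha_set S. weight x) \<le> (\<Sum>x\<in>V. weight x)"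
    unfolding alpha_set_def using weight_pos by (intro sum_mono2[OF finite_V]) (auto simp: less_imp_le)
  then show ?thesis
    unfolding potential_def using total_weight_pos by simp
qed

lemma potential_reproduce:
  assumes "w \<in> V"
  shows "potential (reproduce S v w) = potential S +
    (if S v = \<alpha> \<and> S w \<noteq> \<alpha> then weight w else if S v \<noteq> \<alpha> \<and> S w = \<alpha> then - weight w else 0)
      / (\<Sum>x\<in>V. weight x)"
proof -
  have finite: "finite (alpha_set S)"
    unfolding alpha_set_def using finite_V by simp
  have "alpha_set (reproduce S v w) = (if S v = \<alpha> then insert w (alpha_set S) else alpha_set S - {w})"
    using assms unfolding alpha_set_def reproduce_def by auto
  then show ?thesis
    unfolding potential_def using assms finite
    by (auto simp: add_divide_distrib diff_divide_distrib sum_diff1 insert_absorb alpha_set_def)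
qed

lemma edge_sym: "E v w \<Longrightarrow> E w v"
  using connected unfolding connected_graph_def undirected_graph_def by blast

text \<open>The weights 1/deg make the two directions of an edge comparable by fitness alone:
  both sides are a fitness divided by the same product of total fitness and the two degrees.\<close>
lemma move_prob_weight_le:
  assumes S: "S \<in> states V \<tau>" and "v \<in> V" "w \<in> V" "S v = \<alpha>"
  shows "move_prob S w * weight v \<le> move_prob S v * weight w"
proof -
  let ?c = "1 / (total_fitness V f S * deg v * deg w)"
  have "move_prob S v * weight w = real_of_rat (f (S v)) * ?c"
    and "move_prob S w * weight v = real_of_rat (f (S w)) * ?c"
    by (simp_all add: move_prob_def weight_def)
  moreover have "0 \<le> ?c"
    using total_fitness_pos[OF S] deg_pos assms(2,3) by (simp add: less_imp_le)
  moreover have "real_of_rat (f (S w)) \<le> real_of_rat (f (S v))"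
    using fitness_bounds(2)[OF S \<open>w \<in> V\<close>] assms(4) by simp
  ultimately show ?thesis
    by (simp add: divide_right_mono)
qed

lemma potential_edge_drift_nonneg:
  assumes S: "S \<in> states V \<tau>" and v: "v \<in> V" and w: "w \<in> V"
  shows "0 \<le> move_prob S v * (potential (reproduce S v w) - potential S)
    + move_prob S w * (potential (reproduce S w v) - potential S)"
proof -
  consider "S v = \<alpha>" "S w \<noteq> \<alpha>" | "S v \<noteq> \<alpha>" "S w = \<alpha>" | "(S v = \<alpha>) = (S w = \<alpha>)"
    by blast
  then show ?thesis
  proof cases
    case 1
    then show ?thesis
      using move_prob_weight_le[OF S v w] total_weight_pos v w
      by (simp add: potential_reproduce diff_divide_distrib[symmetric])
  next
    case 2
    then show ?thesis
      using move_prob_weight_le[OF S w v] total_weight_pos v w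
      by (simp add: potential_reproduce diff_divide_distrib[symmetric])
  next
    case 3
    then show ?thesis
      using v w by (auto simp: potential_reproduce)
  qed
qed

lemma potential_le_step_expect:
  assumes S: "S \<in> states V \<tau>"
  shows "potential S \<le> step_expect potential S"
proof -
  define H where "H v w = (if E v w then move_prob S v * (potential (reproduce S v w) - potential S) else 0)"
    for v w
  have "0 \<le> H v w + H w v" if "v \<in> V" "w \<in> V" for v w
  proof (cases "E v w")
    case True
    then show ?thesis
      using potential_edge_drift_nonneg[OF S that] edge_sym[OF True] unfolding H_def by simp
  next
    case False
    then have "\<not> E w v"
      using edge_sym by blast
    then show ?thesis
      using False unfolding H_def by simp
  qed
  then have "0 \<le> (\<Sum>v\<in>V. \<Sum>w\<in>V. H v w)"
    by (rule double_sum_nonneg_if_pairs_nonneg)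
  also have "\<dots> = (\<Sum>v\<in>V. \<Sum>w\<in>nbhd V E v. move_prob S v * (potential (reproduce S v w) - potential S))"
    unfolding nbhd_def H_def by (rule sum.cong[OF refl]) (simp add: sum.inter_filter[OF finite_V])
  also have "\<dots> = step_expect potential S - potential S * (\<Sum>v\<in>V. \<Sum>w\<in>nbhd V E v. move_prob S v)"
    unfolding step_expect_def
    by (simp add: right_diff_distrib sum_subtractf sum_distrib_left mult_ac)
  finally show ?thesis
    using sum_move_prob[OF S] by simp
qed

lemma step_expect_ge_move:
  assumes S: "S \<in> states V \<tau>" and g: "\<And>S'. S' \<in> states V \<tau> \<Longrightarrow> 0 \<le> g S'"
    and v: "v \<in> V" and w: "w \<in> nbhd V E v"
  shows "move_prob S v * g (reproduce S v w) \<le> step_expect g S"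
proof -
  have nonneg: "0 \<le> move_prob S v' * g (reproduce S v' w')" if "v' \<in> V" "w' \<in> nbhd V E v'" for v' w'
    using that nbhd_subset
    by (blast intro: mult_nonneg_nonneg move_prob_nonneg[OF S] g reproduce_in_states[OF S])
  have "move_prob S v * g (reproduce S v w) \<le> (\<Sum>w'\<in>nbhd V E v. move_prob S v * g (reproduce S v w'))"
    using nonneg v w finite_nbhd by (intro member_le_sum) auto
  also have "\<dots> \<le> step_expect g S"
    unfolding step_expect_def using nonneg v finite_V finite_nbhd
    by (intro member_le_sum sum_nonneg) auto
  finally show ?thesis .
qed

lemma move_prob_ge:
  assumes S: "S \<in> states V \<tau>" and v: "v \<in> V" and "S v = \<alpha>"
  shows "1 / real (card V) ^ 2 \<le> move_prob S v"
proof -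
  let ?F = "total_fitness V f S" and ?r = "real_of_rat (f \<alpha>)"
  have "0 < ?r"
    using fitness_bounds(1)[OF S v] assms(3) by simp
  then have "1 / real (card V) \<le> ?r / ?F"
    using total_fitness_pos[OF S] total_fitness_le[OF S] two_le_card by (simp add: field_simps)
  moreover have "1 / real (card V) \<le> 1 / deg v"
    using deg_le_card deg_pos[OF v] by (simp add: frac_le)
  ultimately have "1 / real (card V) * (1 / real (card V)) \<le> ?r / ?F * (1 / deg v)"
    using \<open>0 < ?r\<close> total_fitness_pos[OF S] by (intro mult_mono) simp_all
  then show ?thesis
    unfolding move_prob_def using assms(3) by (simp add: power2_eq_square)
qed

definition resolved :: "('v \<Rightarrow> 't) \<Rightarrow> bool" where
  "resolved S \<longleftrightarrow> monochromatic V \<alpha> S \<or> alpha_set S = {}"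

text \<open>The probability that after t steps \<alpha> has neither fixed nor died out.\<close>
primrec unresolved :: "nat \<Rightarrow> ('v \<Rightarrow> 't) \<Rightarrow> real" where
  "unresolved 0 S = (if resolved S then 0 else 1)"
| "unresolved (Suc t) S = (if resolved S then 0 else step_expect (unresolved t) S)"

lemma unresolved_resolved: "resolved S \<Longrightarrow> unresolved t S = 0"
  by (cases t) simp_all

lemma hit_within_unresolved_bounds:
  assumes "S \<in> states V \<tau>"
  shows "0 \<le> hit_within V E f \<alpha> t S \<and> 0 \<le> unresolved t S \<and>
    hit_within V E f \<alpha> t S + unresolved t S \<le> 1"
  using assms
proof (induction t arbitrary: S)
  case 0
  then show ?case by (simp add: resolved_def)
next
  case (Suc t)
  show ?case
  proof (cases "monochromatic V \<alpha> S")
    case True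
    then show ?thesis by (simp add: hit_within_Suc resolved_def)
  next
    case False
    have "step_expect (hit_within V E f \<alpha> t) S + step_expect (unresolved t) S
        = step_expect (\<lambda>S'. hit_within V E f \<alpha> t S' + unresolved t S') S"
      by (simp add: step_expect_add)
    also have "\<dots> \<le> step_expect (\<lambda>_. 1) S"
      using Suc by (intro step_expect_mono) auto
    also have "\<dots> = 1"
      using step_expect_const Suc.prems by simp
    moreover have "0 \<le> step_expect (hit_within V E f \<alpha> t) S" "0 \<le> step_expect (unresolved t) S"
      using Suc by (auto intro!: step_expect_nonneg)
    ultimately show ?thesis
      using False by (simp add: hit_within_Suc)
  qed
qed

lemma potential_le_hit_within_if_resolved:
  assumes "S \<in> states V \<tau>" "resolved S"
  shows "potential S \<le> hit_within V E f \<alpha> t S"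
proof (cases "monochromatic V \<alpha> S")
  case True
  then have "hit_within V E f \<alpha> t S = 1"
    by (cases t) (simp_all add: hit_within_Suc)
  then show ?thesis
    using potential_le_one by simp
next
  case False
  then have "potential S = 0"
    using assms(2) unfolding resolved_def potential_def by simp
  then show ?thesis
    using hit_within_unresolved_bounds[OF assms(1)] by simp
qed

lemma potential_le_hit_within_plus_unresolved:
  assumes "S \<in> states V \<tau>"
  shows "potential S \<le> hit_within V E f \<alpha> t S + unresolved t S"
  using assms
proof (induction t arbitrary: S)
  case 0
  show ?case
  proof (cases "resolved S")
    case True
    then show ?thesis
      using potential_le_hit_within_if_resolved[OF 0 True, of 0] unresolved_resolved[OF True, of 0]
      by linarith
  next
    case False
    then show ?thesis
      using potential_le_one[of S] hit_within_unresolved_bounds[OF 0, of 0] by simp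
  qed
next
  case (Suc t)
  show ?case
  proof (cases "resolved S")
    case True
    then show ?thesis
      using potential_le_hit_within_if_resolved[OF Suc.prems] by (simp add: unresolved_resolved)
  next
    case False
    then have "\<not> monochromatic V \<alpha> S"
      unfolding resolved_def by simp
    have "potential S \<le> step_expect potential S"
      by (rule potential_le_step_expect[OF Suc.prems])
    also have "\<dots> \<le> step_expect (\<lambda>S'. hit_within V E f \<alpha> t S' + unresolved t S') S"
      using Suc by (intro step_expect_mono) auto
    also have "\<dots> = hit_within V E f \<alpha> (Suc t) S + unresolved (Suc t) S"
      using False \<open>\<not> monochromatic V \<alpha> S\<close> by (simp add: step_expect_add hit_within_Suc)
    finally show ?thesis .
  qed
qed

lemma alpha_spreading_move:
  assumes "alpha_set S \<noteq> {}" "\<not> monochromatic V \<alpha> S"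
  obtains v w where "v \<in> V" "S v = \<alpha>" "w \<in> nbhd V E v"
    "alpha_set (reproduce S v w) \<noteq> {}"
    "card (V - alpha_set (reproduce S v w)) < card (V - alpha_set S)"
proof -
  obtain x where x: "x \<in> alpha_set S"
    using assms(1) by blast
  obtain y where y: "y \<in> V - alpha_set S"
    using assms(2) unfolding monochromatic_def alpha_set_def by auto
  obtain v w where v: "v \<in> alpha_set S" and w: "w \<in> V - alpha_set S" and "E v w"
    using connected_graph_edge_leaving[OF connected x alpha_set_subset y] by blast
  then have "alpha_set (reproduce S v w) = insert w (alpha_set S)"
    unfolding alpha_set_def reproduce_def by auto
  then have "V - alpha_set (reproduce S v w) = (V - alpha_set S) - {w}"
    by auto
  moreover have "card ((V - alpha_set S) - {w}) < card (V - alpha_set S)"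
    using w finite_V by (intro card_Diff1_less) auto
  ultimately have "card (V - alpha_set (reproduce S v w)) < card (V - alpha_set S)"
    by simp
  moreover have "v \<in> V" "S v = \<alpha>" "w \<in> nbhd V E v"
    using v w \<open>E v w\<close> unfolding alpha_set_def nbhd_def by auto
  ultimately show ?thesis
    using that \<open>alpha_set (reproduce S v w) = insert w (alpha_set S)\<close> by blast
qed

lemma power_inverse_card_square_le_one: "(1 / real (card V) ^ 2) ^ k \<le> 1"
proof -
  have "1 / real (card V) ^ 2 \<le> 1"
    using two_le_card by simp
  then show ?thesis
    by (rule power_le_one[rotated]) simp
qed

lemma hit_within_ge_power:
  assumes "S \<in> states V \<tau>" "alpha_set S \<noteq> {}" "card (V - alpha_set S) \<le> k"
  shows "(1 / real (card V) ^ 2) ^ k \<le> hit_within V E f \<alpha> k S"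
  using assms
proof (induction k arbitrary: S)
  case 0
  then have "monochromatic V \<alpha> S"
    using finite_V unfolding monochromatic_def alpha_set_def by auto
  then show ?case by simp
next
  case (Suc k)
  show ?case
  proof (cases "monochromatic V \<alpha> S")
    case True
    then have "hit_within V E f \<alpha> (Suc k) S = 1"
      by (simp only: hit_within_Suc if_True)
    then show ?thesis
      using power_inverse_card_square_le_one[of "Suc k"] by linarith
  next
    case False
    then obtain v w where v: "v \<in> V" "S v = \<alpha>" and w: "w \<in> nbhd V E v"
      and spread: "alpha_set (reproduce S v w) \<noteq> {}"
        "card (V - alpha_set (reproduce S v w)) < card (V - alpha_set S)"
      using alpha_spreading_move Suc.prems(2) by blast
    have "reproduce S v w \<in> states V \<tau>"
      using reproduce_in_states[OF Suc.prems(1) v(1)] w nbhd_subset by blast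
    then have "(1 / real (card V) ^ 2) ^ k \<le> hit_within V E f \<alpha> k (reproduce S v w)"
      using Suc.IH spread Suc.prems(3) by simp
    then have "1 / real (card V) ^ 2 * (1 / real (card V) ^ 2) ^ k
        \<le> move_prob S v * hit_within V E f \<alpha> k (reproduce S v w)"
      using move_prob_ge[OF Suc.prems(1) v] move_prob_nonneg[OF Suc.prems(1) v(1)]
      by (intro mult_mono) simp_all
    also have "\<dots> \<le> step_expect (hit_within V E f \<alpha> k) S"
      using hit_within_unresolved_bounds by (intro step_expect_ge_move[OF Suc.prems(1) _ v(1) w]) blast
    also have "\<dots> = hit_within V E f \<alpha> (Suc k) S"
      by (simp only: hit_within_Suc False if_False)
    finally show ?thesis
      by (simp only: power_Suc)
  qed
qed

text \<open>A lower bound, uniform over states in which \<alpha> is present, for the probability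
  that \<alpha> fixes within card V steps.\<close>
abbreviation \<delta> :: real where
  "\<delta> \<equiv> (1 / real (card V) ^ 2) ^ card V"

lemma \<delta>_pos: "0 < \<delta>"
  using two_le_card by simp

lemma \<delta>_le_one: "\<delta> \<le> 1"
  by (rule power_inverse_card_square_le_one)

lemma hit_within_card_ge:
  assumes "S \<in> states V \<tau>" "alpha_set S \<noteq> {}"
  shows "\<delta> \<le> hit_within V E f \<alpha> (card V) S"
  using assms finite_V by (intro hit_within_ge_power) (auto intro: card_mono)

lemma unresolved_add_card:
  assumes "S \<in> states V \<tau>"
  shows "unresolved (t + card V) S \<le> (1 - \<delta>) * unresolved t S"
  using assms
proof (induction t arbitrary: S)
  case 0
  show ?case
  proof (cases "resolved S")
    case True
    then show ?thesis by (simp add: unresolved_resolved)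
  next
    case False
    then have "alpha_set S \<noteq> {}"
      unfolding resolved_def by simp
    then show ?thesis
      using False hit_within_card_ge[OF 0] hit_within_unresolved_bounds[OF 0, of "card V"] by simp
  qed
next
  case (Suc t)
  show ?case
  proof (cases "resolved S")
    case True
    then show ?thesis by (simp add: unresolved_resolved)
  next
    case False
    have "step_expect (unresolved (t + card V)) S \<le> step_expect (\<lambda>S'. (1 - \<delta>) * unresolved t S') S"
      using Suc by (intro step_expect_mono) auto
    then show ?thesis
      using False by (simp add: step_expect_cmult)
  qed
qed

lemma unresolved_decay:
  assumes "S \<in> states V \<tau>"
  shows "unresolved (j * card V) S \<le> (1 - \<delta>) ^ j"
  using assms
proof (induction j arbitrary: S)
  case 0
  then show ?case by simp
next
  case (Suc j)
  have "unresolved (Suc j * card V) S \<le> (1 - \<delta>) * unresolved (j * card V) S"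
    using unresolved_add_card[OF Suc.prems, of "j * card V"] by (simp add: add.commute)
  also have "\<dots> \<le> (1 - \<delta>) * (1 - \<delta>) ^ j"
    using Suc \<delta>_le_one by (intro mult_left_mono) auto
  finally show ?case by simp
qed

lemma potential_le_fixation_prob:
  assumes S: "S \<in> states V \<tau>"
  shows "potential S \<le> fixation_prob V E f \<alpha> S"
proof (rule LIMSEQ_le_const2)
  show "(\<lambda>j. potential S - (1 - \<delta>) ^ j) \<longlonglongrightarrow> potential S"
    using tendsto_diff[OF tendsto_const LIMSEQ_power_zero[of "1 - \<delta>"]] \<delta>_pos \<delta>_le_one by simp
  have "hit_within V E f \<alpha> t S \<le> 1" for t
    using hit_within_unresolved_bounds[OF S, of t] by linarith
  then have "bdd_above (range (\<lambda>t. hit_within V E f \<alpha> t S))"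
    by (intro bdd_aboveI2)
  then have hit_le: "hit_within V E f \<alpha> t S \<le> fixation_prob V E f \<alpha> S" for t
    unfolding fixation_prob_def by (rule cSUP_upper[OF UNIV_I])
  show "\<exists>N. \<forall>j\<ge>N. potential S - (1 - \<delta>) ^ j \<le> fixation_prob V E f \<alpha> S"
  proof (intro exI[of _ 0] allI impI)
    fix j :: nat
    show "potential S - (1 - \<delta>) ^ j \<le> fixation_prob V E f \<alpha> S"
      using potential_le_hit_within_plus_unresolved[OF S, of "j * card V"]
        unresolved_decay[OF S, of j] hit_le[of "j * card V"]
      by linarith
  qed
qed

end

locale moran_two_types = moran_fittest +
  fixes \<beta>
  assumes types: "\<tau> = {\<alpha>, \<beta>}" and distinct_types: "\<alpha> \<noteq> \<beta>"
begin

lemma finite_states: "finite (states V \<tau>)"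
  unfolding states_def types using finite_V by (intro finite_PiE) auto

lemma expected_potential_ge_weight:
  assumes M: "set_pmf M \<subseteq> states V \<tau>" and u: "u \<in> V" and "\<forall>S\<in>set_pmf M. S u = \<alpha>"
  shows "weight u / (\<Sum>x\<in>V. weight x) \<le> (\<Sum>S\<in>states V \<tau>. pmf M S * potential S)"
proof -
  let ?c = "weight u / (\<Sum>x\<in>V. weight x)"
  have "?c = (\<Sum>S\<in>states V \<tau>. pmf M S * ?c)"
    using sum_pmf_eq_1[OF finite_states M] by (simp only: sum_distrib_right[symmetric] mult_1)
  also have "\<dots> \<le> (\<Sum>S\<in>states V \<tau>. pmf M S * potential S)"
  proof (intro sum_mono)
    fix S
    show "pmf M S * ?c \<le> pmf M S * potential S"
    proof (cases "S \<in> set_pmf M")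
      case True
      then have "S u = \<alpha>"
        using assms(3) by blast
      then show ?thesis
        by (intro mult_left_mono potential_ge_weight[OF u]) simp_all
    next
      case False
      then show ?thesis by (simp add: set_pmf_iff)
    qed
  qed
  finally show ?thesis .
qed

lemma init_dists_decompose:
  assumes "D \<in> init_dists V \<tau>"
  obtains Dd where
    "\<And>u \<gamma>. u \<in> distinct_tuples 2 V \<Longrightarrow> \<gamma> \<in> {[\<alpha>, \<beta>], [\<beta>, \<alpha>]} \<Longrightarrow>
      set_pmf (Dd (u, \<gamma>)) \<subseteq> states_fixing V \<tau> u \<gamma>"
    "\<And>g. (\<Sum>S\<in>states V \<tau>. pmf D S * g S) =
      (\<Sum>u\<in>distinct_tuples 2 V. (\<Sum>S\<in>states V \<tau>. pmf (Dd (u, [\<alpha>, \<beta>])) S * g S)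
        + (\<Sum>S\<in>states V \<tau>. pmf (Dd (u, [\<beta>, \<alpha>])) S * g S))
      / real (card (distinct_tuples 2 V) * 2)"
proof -
  let ?P = "distinct_tuples 2 V \<times> {[\<alpha>, \<beta>], [\<beta>, \<alpha>]}"
  have "card \<tau> = 2"
    using distinct_types unfolding types by simp
  have tuples: "distinct_tuples (card \<tau>) V \<times> distinct_tuples (card \<tau>) \<tau> = ?P"
    unfolding \<open>card \<tau> = 2\<close> by (simp add: types distinct_tuples_two_doubleton[OF distinct_types])
  obtain Dd where supp: "\<And>p. p \<in> ?P \<Longrightarrow> set_pmf (Dd p) \<subseteq> states_fixing V \<tau> (fst p) (snd p)"
    and pmf_D: "\<And>S. pmf D S = 1 / real (card ?P) * (\<Sum>p\<in>?P. pmf (Dd p) S)"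
    using assms unfolding init_dists_def tuples by blast
  have pair_sum: "(\<Sum>p\<in>?P. h p) = (\<Sum>u\<in>distinct_tuples 2 V. h (u, [\<alpha>, \<beta>]) + h (u, [\<beta>, \<alpha>]))"
    for h :: "_ \<Rightarrow> real"
    using distinct_types by (simp add: sum.cartesian_product')
  show ?thesis
  proof (rule that)
    show "set_pmf (Dd (u, \<gamma>)) \<subseteq> states_fixing V \<tau> u \<gamma>"
      if "u \<in> distinct_tuples 2 V" "\<gamma> \<in> {[\<alpha>, \<beta>], [\<beta>, \<alpha>]}" for u \<gamma>
      using supp[of "(u, \<gamma>)"] that by simp
    fix g :: "_ \<Rightarrow> real"
    have "(\<Sum>S\<in>states V \<tau>. pmf D S * g S) = (\<Sum>S\<in>states V \<tau>. \<Sum>p\<in>?P. pmf (Dd p) S * g S) / real (card ?P)"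
      unfolding pmf_D by (simp add: sum_distrib_right sum_divide_distrib)
    also have "\<dots> = (\<Sum>p\<in>?P. \<Sum>S\<in>states V \<tau>. pmf (Dd p) S * g S) / real (card ?P)"
      by (subst sum.swap) (rule refl)
    finally show "(\<Sum>S\<in>states V \<tau>. pmf D S * g S) =
      (\<Sum>u\<in>distinct_tuples 2 V. (\<Sum>S\<in>states V \<tau>. pmf (Dd (u, [\<alpha>, \<beta>])) S * g S)
        + (\<Sum>S\<in>states V \<tau>. pmf (Dd (u, [\<beta>, \<alpha>])) S * g S))
      / real (card (distinct_tuples 2 V) * 2)"
      using distinct_types by (simp add: pair_sum card_cartesian_product)
  qed
qed

lemma expected_potential_init_dist:
  assumes "D \<in> init_dists V \<tau>"
  shows "1 / real (card V) \<le> (\<Sum>S\<in>states V \<tau>. pmf D S * potential S)"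
proof -
  let ?T = "distinct_tuples 2 V" and ?W = "\<Sum>x\<in>V. weight x"
  obtain Dd where supp: "\<And>u \<gamma>. u \<in> ?T \<Longrightarrow> \<gamma> \<in> {[\<alpha>, \<beta>], [\<beta>, \<alpha>]} \<Longrightarrow>
      set_pmf (Dd (u, \<gamma>)) \<subseteq> states_fixing V \<tau> u \<gamma>"
    and mixture: "\<And>g. (\<Sum>S\<in>states V \<tau>. pmf D S * g S) =
      (\<Sum>u\<in>?T. (\<Sum>S\<in>states V \<tau>. pmf (Dd (u, [\<alpha>, \<beta>])) S * g S)
        + (\<Sum>S\<in>states V \<tau>. pmf (Dd (u, [\<beta>, \<alpha>])) S * g S)) / real (card ?T * 2)"
    using init_dists_decompose[OF assms] by blast
  have "1 / real (card V) = (\<Sum>u\<in>?T. (weight (u ! 0) + weight (u ! 1)) / ?W) / real (card ?T * 2)"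
    unfolding sum_divide_distrib[symmetric] sum_distinct_tuples_two[OF finite_V]
      card_distinct_tuples_two[OF finite_V]
    using total_weight_pos two_le_card by (simp add: of_nat_diff field_simps)
  also have "\<dots> \<le> (\<Sum>S\<in>states V \<tau>. pmf D S * potential S)"
    unfolding mixture
  proof (intro divide_right_mono sum_mono)
    fix u assume "u \<in> ?T"
    then have "length u = 2" "u ! 0 \<in> V" "u ! 1 \<in> V"
      unfolding distinct_tuples_def by auto
    then show "(weight (u ! 0) + weight (u ! 1)) / ?W
        \<le> (\<Sum>S\<in>states V \<tau>. pmf (Dd (u, [\<alpha>, \<beta>])) S * potential S)
          + (\<Sum>S\<in>states V \<tau>. pmf (Dd (u, [\<beta>, \<alpha>])) S * potential S)"
      using supp[OF \<open>u \<in> ?T\<close>, of "[\<alpha>, \<beta>]"] supp[OF \<open>u \<in> ?T\<close>, of "[\<beta>, \<alpha>]"]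
      unfolding add_divide_distrib
      by (intro add_mono expected_potential_ge_weight) (fastforce simp: states_fixing_def)+
  qed simp
  finally show ?thesis .
qed

lemma fixation_prob_dist_ge:
  assumes "D \<in> init_dists V \<tau>"
  shows "1 / real (card V) \<le> fixation_prob_dist V E \<tau> f \<alpha> D"
proof -
  have "(\<Sum>S\<in>states V \<tau>. pmf D S * potential S) \<le> fixation_prob_dist V E \<tau> f \<alpha> D"
    unfolding fixation_prob_dist_def using potential_le_fixation_prob
    by (intro sum_mono mult_left_mono) auto
  then show ?thesis
    using expected_potential_init_dist[OF assms] by linarith
qed

end

theorem lemma8:
  fixes V :: "'v set" and E :: "'v \<Rightarrow> 'v \<Rightarrow> bool" and \<tau> :: "'t set"
    and f :: "'t \<Rightarrow> rat" and \<alpha> :: 't and D :: "('v \<Rightarrow> 't) pmf"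
  assumes "connected_graph V E"
    and "card \<tau> = 2"
    and "\<forall>i\<in>\<tau>. f i \<ge> 1"
    and "\<alpha> \<in> max_types \<tau> f"
    and "D \<in> init_dists V \<tau>"
  shows "fixation_prob_dist V E \<tau> f \<alpha> D \<ge> 1 / real (card V)"
proof -
  have "\<alpha> \<in> \<tau>" and f_\<alpha>: "f \<alpha> = Max (f ` \<tau>)"
    using assms(4) unfolding max_types_def by auto
  then obtain \<beta> where \<tau>: "\<tau> = {\<alpha>, \<beta>}" "\<alpha> \<noteq> \<beta>"
    using assms(2) by (metis card_2_iff doubleton_eq_iff insertE singletonD)
  have "2 \<le> card V"
    using card_ge_if_distinct_tuples_nonempty[OF connected_graph_finite[OF assms(1)]
        init_dists_tuples_nonempty[OF assms(5)]] assms(2) by simp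
  moreover have "0 < f i" if "i \<in> \<tau>" for i
    using assms(3) that by (meson less_le_trans zero_less_one)
  moreover have "f i \<le> f \<alpha>" if "i \<in> \<tau>" for i
    unfolding f_\<alpha> using that \<tau>(1) by (intro Max_ge) auto
  ultimately interpret moran_two_types V E \<tau> f \<alpha> \<beta>
    using assms(1) \<tau> by unfold_locales auto
  show ?thesis
    using fixation_prob_dist_ge[OF assms(5)] .
qed

end
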